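(* Let $n\ge2$ and let $Q$ be an $n$-pre-admissible quiver. Then there exists a flow path in $Q$ if and only if $Q\neq A_1$ and $Q\ne\tilde{A}_m$ for every $m\ge1$.
   Context: Quivers are finite and connected. $\delta(v)=(\delta^-(v),\delta^+(v))$ counts arrows ending/starting at $v$. $Q$ is $n$-pre-admissible if (i) every $\delta(v)\in\{(0,0),(0,1),(1,0),(1,1),(1,2),(2,1)\}$, with $(2,2)$ also allowed when $n=2$; (ii) at most one arrow from any vertex to any vertex; (iii) $\delta^+(v)+\delta^-(u)\le3$ for every arrow $v\to u$. A ($k$-)flow path ($k\ge2$) is a path $v_1\to v_2\to\cdots\to v_k$ in $Q$ such that $\delta(v_s)=(1,1)$ if and only if $1<s<k$. $A_1$ is the one-vertex quiver without arrows; $\tilde A_m$ is the oriented cycle $1\to\cdots\to m\to1$ (a loop if $m=1$). *)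

theory Defs
  imports Main
begin

definition indeg :: "'a set \<Rightarrow> ('a \<Rightarrow> 'v) \<Rightarrow> 'v \<Rightarrow> nat" where
  "indeg A t v = card {a \<in> A. t a = v}"

definition outdeg :: "'a set \<Rightarrow> ('a \<Rightarrow> 'v) \<Rightarrow> 'v \<Rightarrow> nat" where
  "outdeg A s v = card {a \<in> A. s a = v}"

definition deg :: "'a set \<Rightarrow> ('a \<Rightarrow> 'v) \<Rightarrow> ('a \<Rightarrow> 'v) \<Rightarrow> 'v \<Rightarrow> nat \<times> nat" where
  "deg A s t v = (indeg A t v, outdeg A s v)"

definition undirected_adj :: "'a set \<Rightarrow> ('a \<Rightarrow> 'v) \<Rightarrow> ('a \<Rightarrow> 'v) \<Rightarrow> ('v \<times> 'v) set" where
  "undirected_adj A s t = {(u, w). \<exists>a\<in>A. (s a = u \<and> t a = w) \<or> (s a = w \<and> t a = u)}"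

definition quiver :: "'v set \<Rightarrow> 'a set \<Rightarrow> ('a \<Rightarrow> 'v) \<Rightarrow> ('a \<Rightarrow> 'v) \<Rightarrow> bool" where
  "quiver V A s t \<longleftrightarrow> finite V \<and> finite A \<and> (\<forall>a\<in>A. s a \<in> V \<and> t a \<in> V)
     \<and> V \<noteq> {} \<and> (\<forall>u\<in>V. \<forall>w\<in>V. (u, w) \<in> (undirected_adj A s t)\<^sup>*)"

definition pre_admissible :: "nat \<Rightarrow> 'v set \<Rightarrow> 'a set \<Rightarrow> ('a \<Rightarrow> 'v) \<Rightarrow> ('a \<Rightarrow> 'v) \<Rightarrow> bool" where
  "pre_admissible n V A s t \<longleftrightarrow>
     (\<forall>v\<in>V. deg A s t v \<in> {(0,0),(0,1),(1,0),(1,1),(1,2),(2,1)}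
              \<or> (n = 2 \<and> deg A s t v = (2,2)))
   \<and> (\<forall>a\<in>A. \<forall>b\<in>A. s a = s b \<and> t a = t b \<longrightarrow> a = b)
   \<and> (\<forall>a\<in>A. outdeg A s (s a) + indeg A t (t a) \<le> 3)"

definition flow_path :: "'v set \<Rightarrow> 'a set \<Rightarrow> ('a \<Rightarrow> 'v) \<Rightarrow> ('a \<Rightarrow> 'v) \<Rightarrow> 'v list \<Rightarrow> 'a list \<Rightarrow> bool" where
  "flow_path V A s t vs as \<longleftrightarrow>
     length vs \<ge> 2 \<and> length as = length vs - 1 \<and> set as \<subseteq> A
   \<and> (\<forall>i < length as. s (as ! i) = vs ! i \<and> t (as ! i) = vs ! (i + 1))
   \<and> (\<forall>i < length vs. deg A s t (vs ! i) = (1,1) \<longleftrightarrow> (0 < i \<and> i < length vs - 1))"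

definition has_flow_path :: "'v set \<Rightarrow> 'a set \<Rightarrow> ('a \<Rightarrow> 'v) \<Rightarrow> ('a \<Rightarrow> 'v) \<Rightarrow> bool" where
  "has_flow_path V A s t \<longleftrightarrow> (\<exists>vs as. flow_path V A s t vs as)"

definition is_A1 :: "'v set \<Rightarrow> 'a set \<Rightarrow> bool" where
  "is_A1 V A \<longleftrightarrow> card V = 1 \<and> A = {}"

text \<open>Q is isomorphic to the oriented cycle 1 -> 2 -> ... -> m -> 1 (a loop if m = 1),
  vertices indexed by {0..<m}.\<close>
definition is_cyclic_A :: "nat \<Rightarrow> 'v set \<Rightarrow> 'a set \<Rightarrow> ('a \<Rightarrow> 'v) \<Rightarrow> ('a \<Rightarrow> 'v) \<Rightarrow> bool" where
  "is_cyclic_A m V A s t \<longleftrightarrow> (\<exists>f g. bij_betw f {0..<m} V \<and> bij_betw g {0..<m} A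
     \<and> (\<forall>i<m. s (g i) = f i \<and> t (g i) = f ((i + 1) mod m)))"

end

theory Submission
  imports Defs "HOL-Combinatorics.Orbits"
begin

(* A flow path starts at a vertex of degree other than (1,1), and an oriented cycle has none.
   Conversely, take a vertex u of degree other than (1,1). If an arrow leaves u, keep following
   the unique outgoing arrow of each (1,1)-vertex reached: the walk cannot revisit a vertex,
   because a (1,1)-vertex has only one incoming arrow and u is not a (1,1)-vertex, so by
   finiteness it stops at a vertex of degree other than (1,1). An arrow entering u is handled
   in the opposite quiver, and an isolated u forces Q = A_1 by connectedness. If every vertex
   has degree (1,1), the successor map permutes the vertices and connectedness makes it one
   cycle. *)

(* Junk unless exactly one arrow a of A has f a = v. *)
definition arrow_at :: "'a set \<Rightarrow> ('a \<Rightarrow> 'v) \<Rightarrow> 'v \<Rightarrow> 'a" where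
  "arrow_at A f v = (THE a. a \<in> A \<and> f a = v)"

lemma card_filter_bij_betw:
  assumes "bij_betw h S T"
  shows "card {x \<in> S. P (h x)} = card {y \<in> T. P y}"
proof -
  have "h ` S = T" using assms by (simp add: bij_betw_def)
  then have "bij_betw h {x \<in> S. P (h x)} {y \<in> T. P y}"
    by (intro bij_betw_subset[OF assms]) auto
  then show ?thesis by (rule bij_betw_same_card)
qed

lemma arrow_at:
  assumes "card {a \<in> A. f a = v} = 1"
  shows "arrow_at A f v \<in> A" "f (arrow_at A f v) = v"
    and "a \<in> A \<Longrightarrow> f a = v \<Longrightarrow> arrow_at A f v = a"
proof -
  obtain b where b: "{a \<in> A. f a = v} = {b}" using assms by (auto simp: card_1_singleton_iff)
  then have eq: "arrow_at A f v = b" unfolding arrow_at_def by (intro the_equality) blast+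
  with b show "arrow_at A f v \<in> A" "f (arrow_at A f v) = v" by blast+
  show "arrow_at A f v = a" if "a \<in> A" "f a = v"
    using b that unfolding eq by (metis (mono_tags, lifting) mem_Collect_eq singletonD)
qed

lemma deg_eq_1_1_iff:
  "deg A s t v = (1, 1) \<longleftrightarrow> card {a \<in> A. t a = v} = 1 \<and> card {a \<in> A. s a = v} = 1"
  by (simp add: deg_def indeg_def outdeg_def)

lemma deg_converse_eq_1_1: "deg A t s v = (1, 1) \<longleftrightarrow> deg A s t v = (1, 1)"
  by (auto simp: deg_def indeg_def outdeg_def)

lemma flow_path_converse:
  assumes "flow_path V A s t vs as"
  shows "flow_path V A t s (rev vs) (rev as)"
proof -
  let ?n = "length vs"
  from assms have len: "?n \<ge> 2" "length as = ?n - 1" "set as \<subseteq> A"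
    and arrows: "\<forall>i<length as. s (as ! i) = vs ! i \<and> t (as ! i) = vs ! (i + 1)"
    and degs: "\<forall>i<?n. deg A s t (vs ! i) = (1, 1) \<longleftrightarrow> 0 < i \<and> i < ?n - 1"
    unfolding flow_path_def by blast+
  have "t (rev as ! i) = rev vs ! i \<and> s (rev as ! i) = rev vs ! (i + 1)" if "i < length as" for i
  proof -
    have j: "length as - Suc i < length as" "length as - Suc i + 1 = ?n - Suc i"
      "length as - Suc i = ?n - Suc (i + 1)" using that len(2) by auto
    show ?thesis using arrows j that by (simp add: rev_nth)
  qed
  moreover have "deg A t s (rev vs ! i) = (1, 1) \<longleftrightarrow> 0 < i \<and> i < ?n - 1" if "i < ?n" for i
  proof -
    have "?n - Suc i < ?n" using that by simp
    then have "deg A s t (vs ! (?n - Suc i)) = (1, 1) \<longleftrightarrow> 0 < i \<and> i < ?n - 1"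
      using degs that by auto
    with that show ?thesis using deg_converse_eq_1_1[of A t s] by (simp add: rev_nth)
  qed
  ultimately show ?thesis using len unfolding flow_path_def by simp
qed

lemma has_flow_path_converse:
  assumes "has_flow_path V A t s"
  shows "has_flow_path V A s t"
proof -
  from assms obtain vs as where "flow_path V A t s vs as" unfolding has_flow_path_def by blast
  then have "flow_path V A s t (rev vs) (rev as)" by (rule flow_path_converse)
  then show ?thesis unfolding has_flow_path_def by blast
qed

lemma flow_path_of_walk:
  assumes "0 < k"
    and "\<forall>i<k. g i \<in> A \<and> s (g i) = f i \<and> t (g i) = f (Suc i)"
    and "\<forall>i\<le>k. deg A s t (f i) = (1, 1) \<longleftrightarrow> 0 < i \<and> i < k"
  shows "flow_path V A s t (map f [0..<Suc k]) (map g [0..<k])"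
  using assms unfolding flow_path_def by (auto simp del: upt_Suc)

lemma flow_path_first_arrow:
  assumes "flow_path V A s t vs as"
  shows "\<exists>a\<in>A. deg A s t (s a) \<noteq> (1, 1)"
proof -
  from assms have len: "length vs \<ge> 2" "length as = length vs - 1" "set as \<subseteq> A"
    and arrows: "\<forall>i<length as. s (as ! i) = vs ! i \<and> t (as ! i) = vs ! (i + 1)"
    and degs: "\<forall>i<length vs. deg A s t (vs ! i) = (1, 1) \<longleftrightarrow> 0 < i \<and> i < length vs - 1"
    unfolding flow_path_def by blast+
  have "0 < length as" using len by simp
  then have "as ! 0 \<in> A" "s (as ! 0) = vs ! 0" using len(3) arrows nth_mem by blast+
  moreover have "deg A s t (vs ! 0) \<noteq> (1, 1)" using degs[rule_format, of 0] len(1) by fastforce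
  ultimately show ?thesis by metis
qed

lemma deg_is_cyclic_A:
  assumes "is_cyclic_A m V A s t" "v \<in> V"
  shows "deg A s t v = (1, 1)"
proof -
  obtain f g where f: "bij_betw f {0..<m} V" and g: "bij_betw g {0..<m} A"
    and arrows: "\<forall>i<m. s (g i) = f i \<and> t (g i) = f ((i + 1) mod m)"
    using assms(1) unfolding is_cyclic_A_def by blast
  have rotate: "bij_betw (\<lambda>i. (i + 1) mod m) {0..<m} {0..<m}"
  proof -
    have "inj_on (\<lambda>i. (i + 1) mod m) {0..<m}"
      by (intro inj_onI) (auto simp: mod_if split: if_splits)
    then show ?thesis by (intro bij_betw_imageI endo_inj_surj) auto
  qed
  have "{x \<in> V. x = v} = {v}" using assms(2) by auto
  then have once: "card {i \<in> {0..<m}. f i = v} = 1"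
    using card_filter_bij_betw[OF f, of "\<lambda>x. x = v"] by simp
  have "card {a \<in> A. s a = v} = card {i \<in> {0..<m}. f i = v}"
    using card_filter_bij_betw[OF g, of "\<lambda>a. s a = v"] arrows by (simp cong: conj_cong)
  moreover have "card {a \<in> A. t a = v} = card {i \<in> {0..<m}. f i = v}"
    using card_filter_bij_betw[OF g, of "\<lambda>a. t a = v"] arrows
      card_filter_bij_betw[OF rotate, of "\<lambda>i. f i = v"] by (simp cong: conj_cong)
  ultimately show ?thesis using once unfolding deg_eq_1_1_iff by simp
qed

definition arrow_walk :: "'a set \<Rightarrow> ('a \<Rightarrow> 'v) \<Rightarrow> ('a \<Rightarrow> 'v) \<Rightarrow> 'a \<Rightarrow> nat \<Rightarrow> 'a" where
  "arrow_walk A s t a0 i = ((\<lambda>a. arrow_at A s (t a)) ^^ i) a0"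

lemma arrow_walk_0: "arrow_walk A s t a0 0 = a0"
  by (simp add: arrow_walk_def)

lemma arrow_walk_step:
  assumes "deg A s t (t (arrow_walk A s t a0 i)) = (1, 1)"
  shows "arrow_walk A s t a0 (Suc i) \<in> A"
    and "s (arrow_walk A s t a0 (Suc i)) = t (arrow_walk A s t a0 i)"
proof -
  have "card {a \<in> A. s a = t (arrow_walk A s t a0 i)} = 1"
    using assms unfolding deg_eq_1_1_iff by blast
  from arrow_at(1,2)[OF this]
  show "arrow_walk A s t a0 (Suc i) \<in> A"
    and "s (arrow_walk A s t a0 (Suc i)) = t (arrow_walk A s t a0 i)"
    by (simp_all add: arrow_walk_def)
qed

lemma arrow_walk_exits:
  assumes fin: "finite (t ` A)" and a0: "a0 \<in> A" and start: "deg A s t (s a0) \<noteq> (1, 1)"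
  shows "\<exists>k. deg A s t (t (arrow_walk A s t a0 k)) \<noteq> (1, 1)"
proof (rule ccontr)
  define g where "g = arrow_walk A s t a0"
  assume "\<not> ?thesis"
  then have inner: "deg A s t (t (g i)) = (1, 1)" for i by (simp add: g_def)
  note step = arrow_walk_step[OF inner[unfolded g_def], folded g_def]
  have g_A: "g i \<in> A" for i
    using a0 step(1) by (cases i) (simp_all add: g_def arrow_walk_0)
  have in_unique: "g i = g j" if "t (g i) = t (g j)" for i j
  proof -
    have "card {a \<in> A. t a = t (g i)} = 1" using inner unfolding deg_eq_1_1_iff by blast
    from arrow_at(3)[OF this g_A] show ?thesis using that by metis
  qed
  have "t (g i) \<noteq> t (g j)" if "i < j" for i j
    using that
  proof (induction i arbitrary: j)
    case 0
    then obtain j' where "j = Suc j'" by (cases j) auto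
    then show ?case using in_unique step(2) inner start by (metis arrow_walk_0 g_def)
  next
    case (Suc i)
    then obtain j' where "j = Suc j'" "i < j'" by (cases j) auto
    then show ?case using Suc.IH in_unique step(2) by metis
  qed
  then have "inj (\<lambda>i. t (g i))" by (metis inj_onI linorder_neq_iff)
  moreover have "range (\<lambda>i. t (g i)) \<subseteq> t ` A" using g_A by auto
  ultimately show False using fin by (meson finite_imageD finite_subset infinite_UNIV_nat)
qed

lemma has_flow_path_if_out_arrow:
  assumes "finite (t ` A)" and a0: "a0 \<in> A" and start: "deg A s t (s a0) \<noteq> (1, 1)"
  shows "has_flow_path V A s t"
proof -
  define g where "g = arrow_walk A s t a0"
  define k where "k = (LEAST k. deg A s t (t (g k)) \<noteq> (1, 1))"
  have end_k: "deg A s t (t (g k)) \<noteq> (1, 1)"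
    using LeastI_ex[OF arrow_walk_exits[OF assms]] by (simp add: k_def g_def)
  have before_k: "deg A s t (t (g j)) = (1, 1)" if "j < k" for j
    using not_less_Least[of j] that by (auto simp: k_def)
  note step = arrow_walk_step[OF before_k[unfolded g_def], folded g_def]
  have g_walk: "g i \<in> A \<and> (0 < i \<longrightarrow> s (g i) = t (g (i - 1)))" if "i \<le> k" for i
    using that a0 step by (cases i) (auto simp: g_def arrow_walk_0)
  define f where "f i = (if i = 0 then s a0 else t (g (i - 1)))" for i
  have "flow_path V A s t (map f [0..<Suc (Suc k)]) (map g [0..<Suc k])"
  proof (rule flow_path_of_walk)
    show "\<forall>i<Suc k. g i \<in> A \<and> s (g i) = f i \<and> t (g i) = f (Suc i)"
      using g_walk by (auto simp: f_def g_def arrow_walk_0)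
    show "\<forall>i\<le>Suc k. deg A s t (f i) = (1, 1) \<longleftrightarrow> 0 < i \<and> i < Suc k"
      using start end_k before_k by (auto simp: f_def less_Suc_eq_le le_Suc_eq)
  qed simp
  then show ?thesis unfolding has_flow_path_def by blast
qed

lemma has_flow_path_if_in_arrow:
  assumes "finite (s ` A)" "a0 \<in> A" "deg A s t (t a0) \<noteq> (1, 1)"
  shows "has_flow_path V A s t"
proof (rule has_flow_path_converse)
  show "has_flow_path V A t s"
    using assms deg_converse_eq_1_1[of A s t] by (intro has_flow_path_if_out_arrow) auto
qed

lemma is_A1_if_isolated_vertex:
  assumes q: "quiver V A s t" and u: "u \<in> V" and isolated: "\<forall>a\<in>A. s a \<noteq> u \<and> t a \<noteq> u"
  shows "is_A1 V A"
proof -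
  have "w = u" if "w \<in> V" for w
  proof -
    have "(u, w) \<in> (undirected_adj A s t)\<^sup>*" using q u that unfolding quiver_def by blast
    then show ?thesis
      by (cases rule: converse_rtranclE) (use isolated in \<open>auto simp: undirected_adj_def\<close>)
  qed
  then have "V = {u}" using u by blast
  moreover have "A = {}" using q isolated \<open>V = {u}\<close> unfolding quiver_def by auto
  ultimately show ?thesis unfolding is_A1_def by simp
qed

lemma funpow_returns_if_inj_on:
  assumes "finite S" "p ` S \<subseteq> S" "inj_on p S" "x \<in> S"
  obtains n where "0 < n" "(p ^^ n) x = x"
proof -
  have orbit_in: "(p ^^ i) x \<in> S" for i
    by (induction i) (use assms in auto)
  have "\<not> inj (\<lambda>i. (p ^^ i) x)"
  proof
    assume "inj (\<lambda>i. (p ^^ i) x)"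
    moreover have "finite (range (\<lambda>i. (p ^^ i) x))"
      using orbit_in by (intro finite_subset[OF _ assms(1)]) auto
    ultimately show False using finite_imageD by blast
  qed
  then obtain i j where ij: "i < j" "(p ^^ i) x = (p ^^ j) x"
    unfolding inj_def by (metis linorder_neq_iff)
  then have "(p ^^ (j - i)) x = x"
  proof (induction i arbitrary: j)
    case (Suc i)
    then obtain j' where j: "j = Suc j'" "i < j'" by (cases j) auto
    then have "(p ^^ i) x = (p ^^ j') x"
      using Suc.prems orbit_in by (auto dest: inj_onD[OF assms(3)])
    then show ?case using Suc.IH j by simp
  qed simp
  with ij show thesis by (intro that[of "j - i"]) simp_all
qed

definition successor :: "'a set \<Rightarrow> ('a \<Rightarrow> 'v) \<Rightarrow> ('a \<Rightarrow> 'v) \<Rightarrow> 'v \<Rightarrow> 'v" where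
  "successor A s t v = t (arrow_at A s v)"

lemma successor:
  assumes q: "quiver V A s t" and all: "\<forall>v\<in>V. deg A s t v = (1, 1)"
  shows "successor A s t ` V \<subseteq> V" and "inj_on (successor A s t) V"
    and "a \<in> A \<Longrightarrow> successor A s t (s a) = t a"
proof -
  have ends: "\<forall>a\<in>A. s a \<in> V \<and> t a \<in> V" using q unfolding quiver_def by blast
  have out_deg: "card {a \<in> A. s a = v} = 1" and in_deg: "card {a \<in> A. t a = v} = 1"
    if "v \<in> V" for v using all that unfolding deg_eq_1_1_iff by blast+
  show succ_V: "successor A s t ` V \<subseteq> V"
    using arrow_at(1)[OF out_deg] ends by (auto simp: successor_def)
  show "successor A s t (s a) = t a" if "a \<in> A"
    using arrow_at(3)[OF out_deg, of "s a" a] ends that by (simp add: successor_def)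
  show "inj_on (successor A s t) V"
  proof (rule inj_onI)
    fix v w assume v: "v \<in> V" and w: "w \<in> V" and eq: "successor A s t v = successor A s t w"
    let ?x = "successor A s t v"
    have "?x \<in> V" using succ_V v by blast
    note in_x = arrow_at(3)[OF in_deg[OF this]]
    have "arrow_at A s v = arrow_at A t ?x"
      using in_x[OF arrow_at(1)[OF out_deg[OF v]]] by (simp add: successor_def)
    moreover have "arrow_at A s w = arrow_at A t ?x"
      using in_x[OF arrow_at(1)[OF out_deg[OF w]]] eq by (simp add: successor_def)
    ultimately show "v = w" using arrow_at(2)[OF out_deg] v w by metis
  qed
qed

lemma orbit_successor_eq_vertices:
  assumes q: "quiver V A s t" and all: "\<forall>v\<in>V. deg A s t v = (1, 1)"
    and v0: "v0 \<in> V" "v0 \<in> orbit (successor A s t) v0"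
  shows "orbit (successor A s t) v0 = V"
proof
  let ?O = "orbit (successor A s t) v0"
  note succ = successor[OF q all]
  show "?O \<subseteq> V"
  proof
    fix x assume "x \<in> ?O"
    then show "x \<in> V" by (induction rule: orbit.induct) (use succ(1) v0 in auto)
  qed
  have succ_O: "successor A s t ` ?O = ?O"
    by (intro endo_inj_surj finite_orbit[OF v0(2)] inj_on_subset[OF succ(2)] \<open>?O \<subseteq> V\<close>)
       (auto intro: orbit.step)
  have ends: "\<forall>a\<in>A. s a \<in> V \<and> t a \<in> V" using q unfolding quiver_def by blast
  have closed: "w \<in> ?O" if adj: "(v, w) \<in> undirected_adj A s t" and v_O: "v \<in> ?O" for v w
  proof -
    have "\<exists>a\<in>A. (s a = v \<and> t a = w) \<or> (s a = w \<and> t a = v)"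
      using adj by (simp add: undirected_adj_def)
    then obtain a where a: "a \<in> A" "(s a = v \<and> t a = w) \<or> (s a = w \<and> t a = v)"
      by blast
    from a(2) show ?thesis
    proof
      assume "s a = v \<and> t a = w"
      then show ?thesis using succ(3)[OF a(1)] v_O by (metis orbit.step)
    next
      assume "s a = w \<and> t a = v"
      moreover obtain u where "u \<in> ?O" "v = successor A s t u" using succ_O v_O by blast
      ultimately show ?thesis using succ(2,3) ends a(1) \<open>?O \<subseteq> V\<close> by (metis inj_onD subsetD)
    qed
  qed
  show "V \<subseteq> ?O"
  proof
    fix w assume "w \<in> V"
    with q v0(1) have "(v0, w) \<in> (undirected_adj A s t)\<^sup>*" unfolding quiver_def by blast
    then show "w \<in> ?O"
      by (induction rule: rtrancl_induct) (use v0(2) closed in blast)+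
  qed
qed

lemma is_cyclic_A_if_all_deg_1_1:
  assumes q: "quiver V A s t" and all: "\<forall>v\<in>V. deg A s t v = (1, 1)"
  shows "\<exists>m\<ge>1. is_cyclic_A m V A s t"
proof -
  have "finite V" "V \<noteq> {}" and ends: "\<forall>a\<in>A. s a \<in> V \<and> t a \<in> V"
    using q unfolding quiver_def by auto
  then obtain v0 where v0: "v0 \<in> V" by blast
  note succ = successor[OF q all]
  let ?succ = "successor A s t"
  obtain p where "0 < p" "(?succ ^^ p) v0 = v0"
    using funpow_returns_if_inj_on[OF \<open>finite V\<close> succ(1,2) v0] by blast
  then have v0_orbit: "v0 \<in> orbit ?succ v0"
    unfolding orbit_altdef by (metis (mono_tags, lifting) mem_Collect_eq)
  define m where "m = funpow_dist1 ?succ v0 v0"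
  define f where "f i = (?succ ^^ i) v0" for i
  define g where "g i = arrow_at A s (f i)" for i
  have f_bij: "bij_betw f {0..<m} V"
  proof (rule bij_betw_imageI)
    show "inj_on f {0..<m}"
      unfolding f_def m_def by (rule inj_on_funpow_dist1[OF v0_orbit])
    have "f ` {0..<m} = orbit ?succ v0"
      unfolding f_def m_def by (rule orbit_conv_funpow_dist1[OF v0_orbit, symmetric])
    then show "f ` {0..<m} = V" using orbit_successor_eq_vertices[OF q all v0 v0_orbit] by simp
  qed
  have f_mod: "f (i mod m) = f i" for i
    unfolding f_def m_def by (rule funpow_mod_eq[OF funpow_dist1_prop[OF v0_orbit]])
  have g_arrow: "g i \<in> A" "s (g i) = f i" "t (g i) = f ((i + 1) mod m)" if "i < m" for i
  proof -
    have "f i \<in> V" using f_bij that by (auto dest: bij_betw_apply)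
    then have "card {a \<in> A. s a = f i} = 1" using all unfolding deg_eq_1_1_iff by blast
    from arrow_at(1,2)[OF this] f_mod[of "Suc i"]
    show "g i \<in> A" "s (g i) = f i" "t (g i) = f ((i + 1) mod m)"
      by (simp_all add: g_def f_def successor_def)
  qed
  have g_bij: "bij_betw g {0..<m} A"
  proof (rule bij_betw_imageI)
    show "inj_on g {0..<m}"
      using g_arrow(2) f_bij by (metis atLeastLessThan_iff bij_betw_def inj_on_def)
    have "a \<in> g ` {0..<m}" if "a \<in> A" for a
    proof -
      have "s a \<in> f ` {0..<m}" using ends f_bij that by (simp add: bij_betw_def)
      then obtain i where "i < m" "s a = f i" by auto
      moreover have "arrow_at A s (s a) = a"
        using arrow_at(3)[of A s "s a" a] all ends that unfolding deg_eq_1_1_iff by blast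
      ultimately show ?thesis by (auto simp: g_def)
    qed
    then show "g ` {0..<m} = A" using g_arrow(1) by auto
  qed
  have "m \<ge> 1" by (simp add: m_def)
  then show ?thesis using f_bij g_bij g_arrow unfolding is_cyclic_A_def by blast
qed

theorem lemma2p13:
  fixes n :: nat and V :: "'v set" and A :: "'a set" and s t :: "'a \<Rightarrow> 'v"
  assumes "n \<ge> 2"
    and "quiver V A s t"
    and "pre_admissible n V A s t"
  shows "has_flow_path V A s t \<longleftrightarrow>
           (\<not> is_A1 V A \<and> (\<forall>m\<ge>1. \<not> is_cyclic_A m V A s t))"
proof
  assume "has_flow_path V A s t"
  then obtain a where a: "a \<in> A" "deg A s t (s a) \<noteq> (1, 1)"
    using flow_path_first_arrow unfolding has_flow_path_def by blast
  moreover have "s a \<in> V" using assms(2) a(1) unfolding quiver_def by blast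
  ultimately show "\<not> is_A1 V A \<and> (\<forall>m\<ge>1. \<not> is_cyclic_A m V A s t)"
    using deg_is_cyclic_A[of _ V A s t "s a"] unfolding is_A1_def by auto
next
  assume nondegenerate: "\<not> is_A1 V A \<and> (\<forall>m\<ge>1. \<not> is_cyclic_A m V A s t)"
  then obtain u where u: "u \<in> V" "deg A s t u \<noteq> (1, 1)"
    using is_cyclic_A_if_all_deg_1_1[OF assms(2)] by blast
  have fin: "finite (s ` A)" "finite (t ` A)" using assms(2) unfolding quiver_def by auto
  consider a where "a \<in> A" "s a = u" | a where "a \<in> A" "t a = u" | "\<forall>a\<in>A. s a \<noteq> u \<and> t a \<noteq> u"
    by blast
  then show "has_flow_path V A s t"
  proof cases
    case 1
    then show ?thesis using has_flow_path_if_out_arrow[OF fin(2)] u(2) by blast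
  next
    case 2
    then show ?thesis using has_flow_path_if_in_arrow[OF fin(1)] u(2) by blast
  next
    case 3
    then show ?thesis using is_A1_if_isolated_vertex[OF assms(2) u(1)] nondegenerate by blast
  qed
qed

end
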